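(* Let $X$ be an SL-space with spatial part $Y$, and let $U\subseteq X$. Then $U$ is a clopen Scott upset of $X$ if and only if there is a compact open subset $V$ of $Y$ such that $\mathrm{cl}\,V=U$ (closure taken in $X$).
   Context: A Priestley space is a Stone space $X$ with a partial order such that clopen upsets separate points. An L-space is a Priestley space in which the downset of each clopen set is clopen and the closure of each open upset is open. The spatial part of $X$ is $Y=\{y\in X\mid{\downarrow}y\text{ is clopen}\}$, topologized by declaring $V\subseteq Y$ open iff $V=U\cap Y$ for some clopen upset $U$ of $X$. $X$ is an SL-space if $Y$ is dense in $X$. A Scott upset of $X$ is a closed upset $F$ with $\min F\subseteq Y$. *)

theory Defs
  imports "HOL-Analysis.Analysis"
begin

definition clopenin :: "'a topology \<Rightarrow> 'a set \<Rightarrow> bool" where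
  "clopenin X S \<longleftrightarrow> openin X S \<and> closedin X S"

definition stone_space :: "'a topology \<Rightarrow> bool" where
  "stone_space X \<longleftrightarrow> compact_space X \<and> Hausdorff_space X \<and>
     (\<forall>S. connectedin X S \<longrightarrow> (\<forall>x\<in>S. \<forall>y\<in>S. x = y))"

definition upset_in :: "'a topology \<Rightarrow> ('a \<Rightarrow> 'a \<Rightarrow> bool) \<Rightarrow> 'a set \<Rightarrow> bool" where
  "upset_in X le S \<longleftrightarrow> S \<subseteq> topspace X \<and>
     (\<forall>x\<in>S. \<forall>y\<in>topspace X. le x y \<longrightarrow> y \<in> S)"

definition down_of :: "'a topology \<Rightarrow> ('a \<Rightarrow> 'a \<Rightarrow> bool) \<Rightarrow> 'a set \<Rightarrow> 'a set" where
  "down_of X le S = {y \<in> topspace X. \<exists>x\<in>S. le y x}"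

definition minimals :: "('a \<Rightarrow> 'a \<Rightarrow> bool) \<Rightarrow> 'a set \<Rightarrow> 'a set" where
  "minimals le S = {x \<in> S. \<forall>y\<in>S. le y x \<longrightarrow> y = x}"

definition partial_order_in :: "'a set \<Rightarrow> ('a \<Rightarrow> 'a \<Rightarrow> bool) \<Rightarrow> bool" where
  "partial_order_in A le \<longleftrightarrow> (\<forall>x\<in>A. le x x) \<and>
     (\<forall>x\<in>A. \<forall>y\<in>A. le x y \<and> le y x \<longrightarrow> x = y) \<and>
     (\<forall>x\<in>A. \<forall>y\<in>A. \<forall>z\<in>A. le x y \<and> le y z \<longrightarrow> le x z)"

definition priestley_space :: "'a topology \<Rightarrow> ('a \<Rightarrow> 'a \<Rightarrow> bool) \<Rightarrow> bool" where
  "priestley_space X le \<longleftrightarrow> stone_space X \<and> partial_order_in (topspace X) le \<and>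
     (\<forall>x\<in>topspace X. \<forall>y\<in>topspace X. \<not> le x y \<longrightarrow>
        (\<exists>U. clopenin X U \<and> upset_in X le U \<and> x \<in> U \<and> y \<notin> U))"

definition L_space :: "'a topology \<Rightarrow> ('a \<Rightarrow> 'a \<Rightarrow> bool) \<Rightarrow> bool" where
  "L_space X le \<longleftrightarrow> priestley_space X le \<and>
     (\<forall>U. clopenin X U \<longrightarrow> clopenin X (down_of X le U)) \<and>
     (\<forall>U. openin X U \<and> upset_in X le U \<longrightarrow> openin X (X closure_of U))"

definition spatial_part :: "'a topology \<Rightarrow> ('a \<Rightarrow> 'a \<Rightarrow> bool) \<Rightarrow> 'a set" where
  "spatial_part X le = {y \<in> topspace X. clopenin X (down_of X le {y})}"

definition spatial_topology :: "'a topology \<Rightarrow> ('a \<Rightarrow> 'a \<Rightarrow> bool) \<Rightarrow> 'a topology" where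
  "spatial_topology X le = topology_generated_by
     {U \<inter> spatial_part X le | U. clopenin X U \<and> upset_in X le U}"

definition SL_space :: "'a topology \<Rightarrow> ('a \<Rightarrow> 'a \<Rightarrow> bool) \<Rightarrow> bool" where
  "SL_space X le \<longleftrightarrow> L_space X le \<and> X closure_of (spatial_part X le) = topspace X"

definition scott_upset :: "'a topology \<Rightarrow> ('a \<Rightarrow> 'a \<Rightarrow> bool) \<Rightarrow> 'a set \<Rightarrow> bool" where
  "scott_upset X le F \<longleftrightarrow> closedin X F \<and> upset_in X le F \<and>
     minimals le F \<subseteq> spatial_part X le"

end

theory Submission
  imports Defs
begin

(* The traces W \<inter> Y of the clopen upsets W form a base of the spatial topology that is closed
   under finite unions, so a compact open V \<subseteq> Y is such a trace, and density of Y gives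
   cl (W \<inter> Y) = W.  It remains to see that a clopen upset U is a Scott upset iff U \<inter> Y is compact.
   By Zorn's lemma and compactness, every point of a closed set lies above a minimal one; so if the
   minimal points of U lie in Y, a basic cover of U \<inter> Y also covers the compact set U.  Conversely,
   a minimal point of U outside Y is separated from each point of U \<inter> Y by a clopen upset, and
   finitely many of these give a clopen upset containing U \<inter> Y, hence its closure U, but not that
   point. *)

abbreviation clopen_upset :: "'a topology \<Rightarrow> ('a \<Rightarrow> 'a \<Rightarrow> bool) \<Rightarrow> 'a set \<Rightarrow> bool" where
  "clopen_upset X le W \<equiv> clopenin X W \<and> upset_in X le W"

lemma clopen_upset_Int:
  "clopen_upset X le A \<Longrightarrow> clopen_upset X le B \<Longrightarrow> clopen_upset X le (A \<inter> B)"
  unfolding clopenin_def upset_in_def by auto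

lemma clopen_upset_Un:
  "clopen_upset X le A \<Longrightarrow> clopen_upset X le B \<Longrightarrow> clopen_upset X le (A \<union> B)"
  unfolding clopenin_def upset_in_def by auto

lemma clopen_upset_empty: "clopen_upset X le {}"
  unfolding clopenin_def upset_in_def by auto

lemma finite_Union_closed:
  assumes "finite \<F>" "P {}" "\<And>A B. P A \<Longrightarrow> P B \<Longrightarrow> P (A \<union> B)" "\<And>A. A \<in> \<F> \<Longrightarrow> P A"
  shows "P (\<Union>\<F>)"
  using assms by (induction \<F> rule: finite_induct) auto

section \<open>Minimal points in Priestley spaces\<close>

lemma partial_order_inD:
  assumes "partial_order_in A le"
  shows partial_order_in_refl: "x \<in> A \<Longrightarrow> le x x"
    and partial_order_in_antisym: "x \<in> A \<Longrightarrow> y \<in> A \<Longrightarrow> le x y \<Longrightarrow> le y x \<Longrightarrow> x = y"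
    and partial_order_in_trans:
      "x \<in> A \<Longrightarrow> y \<in> A \<Longrightarrow> z \<in> A \<Longrightarrow> le x y \<Longrightarrow> le y z \<Longrightarrow> le x z"
  using assms unfolding partial_order_in_def by blast+

lemma priestley_space_imp_partial_order: "priestley_space X le \<Longrightarrow> partial_order_in (topspace X) le"
  unfolding priestley_space_def by blast

lemma priestley_space_imp_compact: "priestley_space X le \<Longrightarrow> compact_space X"
  unfolding priestley_space_def stone_space_def by blast

lemma priestley_separation:
  assumes "priestley_space X le" "x \<in> topspace X" "y \<in> topspace X" "\<not> le x y"
  obtains W where "clopen_upset X le W" "x \<in> W" "y \<notin> W"
  using assms unfolding priestley_space_def by blast

lemma priestley_closedin_principal_downset:
  assumes P: "priestley_space X le" and c: "c \<in> topspace X"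
  shows "closedin X {y \<in> topspace X. le y c}"
proof -
  have "\<exists>W. openin X W \<and> y \<in> W \<and> W \<subseteq> topspace X - {y \<in> topspace X. le y c}"
    if y: "y \<in> topspace X - {y \<in> topspace X. le y c}" for y
  proof -
    obtain W where W: "clopen_upset X le W" "y \<in> W" "c \<notin> W"
      using priestley_separation[OF P] c y by blast
    then have "W \<subseteq> topspace X - {y \<in> topspace X. le y c}"
      using c unfolding clopenin_def upset_in_def by auto
    then show ?thesis
      using W unfolding clopenin_def by blast
  qed
  then show ?thesis
    unfolding closedin_def by (subst openin_subopen) auto
qed

lemma partial_order_in_finite_chain_least:
  assumes po: "partial_order_in A le" and C: "finite C" "C \<noteq> {}" "C \<subseteq> A"
    and chain: "\<And>a b. a \<in> C \<Longrightarrow> b \<in> C \<Longrightarrow> le a b \<or> le b a"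
  shows "\<exists>c0\<in>C. \<forall>c\<in>C. le c0 c"
proof -
  have "transp_on C le"
    unfolding transp_on_def using C(3) partial_order_in_trans[OF po] by blast
  moreover have "totalp_on C le"
    unfolding totalp_on_def using chain by blast
  ultimately obtain c0 where c0: "c0 \<in> C" "\<And>c. c \<in> C \<Longrightarrow> c \<noteq> c0 \<Longrightarrow> le c0 c"
    using Finite_Set.bex_least_element[OF C(1,2)] by blast
  have "le c0 c" if "c \<in> C" for c
    using c0 that C(3) partial_order_in_refl[OF po] by (cases "c = c0") auto
  with c0(1) show ?thesis by blast
qed

lemma priestley_chain_has_lower_bound:
  assumes P: "priestley_space X le" and S: "closedin X S"
    and C: "C \<subseteq> S" "C \<noteq> {}" "\<And>a b. a \<in> C \<Longrightarrow> b \<in> C \<Longrightarrow> le a b \<or> le b a"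
  shows "\<exists>u\<in>S. \<forall>c\<in>C. le u c"
proof -
  have SX: "S \<subseteq> topspace X"
    using S closedin_subset by auto
  define \<U> where "\<U> = (\<lambda>c. {y \<in> topspace X. le y c}) ` C"
  have "compactin X S"
    using P S closedin_compact_space priestley_space_imp_compact by blast
  moreover have "\<forall>D\<in>\<U>. closedin X D"
    unfolding \<U>_def using priestley_closedin_principal_downset[OF P] C(1) SX by auto
  moreover have "S \<inter> \<Inter>\<F> \<noteq> {}" if \<F>: "finite \<F>" "\<F> \<subseteq> \<U>" for \<F>
  proof -
    obtain C' where C': "C' \<subseteq> C" "finite C'" "\<F> = (\<lambda>c. {y \<in> topspace X. le y c}) ` C'"
      using \<F> unfolding \<U>_def by (meson finite_subset_image)
    show ?thesis
    proof (cases "C' = {}")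
      case True
      then show ?thesis using C' C by auto
    next
      case False
      have C'X: "C' \<subseteq> topspace X"
        using C' C(1) SX by blast
      obtain c0 where "c0 \<in> C'" "\<forall>c\<in>C'. le c0 c"
        using partial_order_in_finite_chain_least[OF priestley_space_imp_partial_order[OF P]
            C'(2) False C'X] C(3) C'(1) by blast
      then have "c0 \<in> S \<inter> \<Inter>\<F>"
        using C'X C'(1,3) C(1) by auto
      then show ?thesis by blast
    qed
  qed
  ultimately obtain u where "u \<in> S \<inter> \<Inter>\<U>"
    unfolding compactin_fip by blast
  then show ?thesis
    unfolding \<U>_def by auto
qed

lemma priestley_exists_minimal_below:
  assumes P: "priestley_space X le" and F: "closedin X F" and z: "z \<in> F"
  shows "\<exists>m\<in>minimals le F. le m z"
proof -
  have po: "partial_order_in (topspace X) le"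
    using P by (rule priestley_space_imp_partial_order)
  have FX: "F \<subseteq> topspace X"
    using F closedin_subset by auto
  define S where "S = {a \<in> F. le a z}"
  have S_eq: "S = F \<inter> {y \<in> topspace X. le y z}"
    unfolding S_def using FX by auto
  have SX: "S \<subseteq> topspace X" and zS: "z \<in> S"
    using FX z partial_order_in_refl[OF po] unfolding S_def by auto
  have S_closed: "closedin X S"
    unfolding S_eq using F priestley_closedin_principal_downset[OF P] z FX by blast
  have "\<exists>m\<in>S. \<forall>a\<in>S. le a m \<longrightarrow> a = m"
  proof (rule predicate_Zorn)
    show "partial_order_on S (relation_of (\<lambda>a b. le b a) S)"
    proof (rule partial_order_on_relation_ofI)
      fix a b c assume "a \<in> S" "b \<in> S" "c \<in> S"
      with SX show "le a a" and "le b a \<Longrightarrow> le c b \<Longrightarrow> le c a" and "le b a \<Longrightarrow> le a b \<Longrightarrow> a = b"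
        using partial_order_inD[OF po] by blast+
    qed
  next
    fix C assume "C \<in> Chains (relation_of (\<lambda>a b. le b a) S)"
    then have "C \<subseteq> S" "\<And>a b. a \<in> C \<Longrightarrow> b \<in> C \<Longrightarrow> le a b \<or> le b a"
      unfolding Chains_def relation_of_def by auto
    then show "\<exists>u\<in>S. \<forall>a\<in>C. le u a"
      using priestley_chain_has_lower_bound[OF P S_closed] zS by (cases "C = {}") blast+
  qed
  then obtain m where m: "m \<in> S" "\<forall>a\<in>S. le a m \<longrightarrow> a = m"
    by blast
  have "a = m" if "a \<in> F" "le a m" for a
  proof -
    have "le a z"
      using that m(1) FX z partial_order_in_trans[OF po] unfolding S_def by blast
    then show ?thesis
      using that m unfolding S_def by blast
  qed
  then have "m \<in> minimals le F"
    using m(1) unfolding minimals_def S_def by blast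
  then show ?thesis
    using m(1) unfolding S_def by auto
qed

section \<open>The spatial topology\<close>

lemma topspace_spatial_topology: "topspace (spatial_topology X le) = spatial_part X le"
proof -
  have "clopen_upset X le (topspace X)"
    unfolding clopenin_def upset_in_def by auto
  then show ?thesis
    unfolding spatial_topology_def spatial_part_def by auto
qed

lemma openin_spatial_topology_basic:
  "clopen_upset X le W \<Longrightarrow> openin (spatial_topology X le) (W \<inter> spatial_part X le)"
  unfolding spatial_topology_def by (rule topology_generated_by_Basis) auto

lemma openin_spatial_topology_local:
  assumes "openin (spatial_topology X le) S" "x \<in> S"
  shows "\<exists>W. clopen_upset X le W \<and> x \<in> W \<and> W \<inter> spatial_part X le \<subseteq> S"
proof -
  have "generate_topology_on {W \<inter> spatial_part X le | W. clopen_upset X le W} S"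
    using assms(1) unfolding spatial_topology_def openin_topology_generated_by_iff .
  then show ?thesis
    using assms(2)
  proof (induction arbitrary: x rule: generate_topology_on.induct)
    case Empty
    then show ?case by simp
  next
    case (Int a b)
    then obtain W1 W2 where "clopen_upset X le W1" "x \<in> W1" "W1 \<inter> spatial_part X le \<subseteq> a"
      and "clopen_upset X le W2" "x \<in> W2" "W2 \<inter> spatial_part X le \<subseteq> b"
      by (meson IntE)
    then have "clopen_upset X le (W1 \<inter> W2) \<and> x \<in> W1 \<inter> W2 \<and> W1 \<inter> W2 \<inter> spatial_part X le \<subseteq> a \<inter> b"
      using clopen_upset_Int by blast
    then show ?case
      by blast
  next
    case (UN K)
    then show ?case by blast
  next
    case (Basis s)
    then show ?case by blast
  qed
qed

lemma compactin_spatial_topology_subset: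
  "compactin (spatial_topology X le) V \<Longrightarrow> V \<subseteq> spatial_part X le"
  using compactin_subset_topspace topspace_spatial_topology by metis

lemma compactin_spatial_topology_finite_subcover:
  assumes "compactin (spatial_topology X le) V"
    and "\<forall>W\<in>\<W>. clopen_upset X le W" and "V \<subseteq> \<Union>\<W>"
  obtains \<F> where "finite \<F>" "\<F> \<subseteq> \<W>" "V \<subseteq> \<Union>\<F>"
proof -
  have "\<forall>G\<in>(\<lambda>W. W \<inter> spatial_part X le) ` \<W>. openin (spatial_topology X le) G"
    using assms(2) openin_spatial_topology_basic by blast
  moreover have "V \<subseteq> \<Union>((\<lambda>W. W \<inter> spatial_part X le) ` \<W>)"
    using assms(3) compactin_spatial_topology_subset[OF assms(1)] by blast
  ultimately have "\<exists>\<F>'. finite \<F>' \<and> \<F>' \<subseteq> (\<lambda>W. W \<inter> spatial_part X le) ` \<W> \<and> V \<subseteq> \<Union>\<F>'"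
    using assms(1) unfolding compactin_def by blast
  then obtain \<F>' where "finite \<F>'" "\<F>' \<subseteq> (\<lambda>W. W \<inter> spatial_part X le) ` \<W>" "V \<subseteq> \<Union>\<F>'"
    by blast
  then obtain \<F> where "\<F> \<subseteq> \<W>" "finite \<F>" and \<F>'_eq: "\<F>' = (\<lambda>W. W \<inter> spatial_part X le) ` \<F>"
    by (meson finite_subset_image)
  moreover have "V \<subseteq> \<Union>\<F>"
    using \<open>V \<subseteq> \<Union>\<F>'\<close> unfolding \<F>'_eq by auto
  ultimately show ?thesis
    using that by blast
qed

lemma compactin_spatial_topologyI:
  assumes VY: "V \<subseteq> spatial_part X le"
    and basic_covers: "\<And>\<W>. \<forall>W\<in>\<W>. clopen_upset X le W \<Longrightarrow> V \<subseteq> \<Union>\<W> \<Longrightarrow>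
      \<exists>\<F>. finite \<F> \<and> \<F> \<subseteq> \<W> \<and> V \<subseteq> \<Union>\<F>"
  shows "compactin (spatial_topology X le) V"
  unfolding compactin_def topspace_spatial_topology
proof (intro conjI allI impI VY)
  fix \<U> assume \<U>: "(\<forall>G\<in>\<U>. openin (spatial_topology X le) G) \<and> V \<subseteq> \<Union>\<U>"
  define \<W> where "\<W> = {W. clopen_upset X le W \<and> (\<exists>G\<in>\<U>. W \<inter> spatial_part X le \<subseteq> G)}"
  have "V \<subseteq> \<Union>\<W>"
  proof
    fix x assume "x \<in> V"
    then obtain G where "G \<in> \<U>" "x \<in> G"
      using \<U> by blast
    then obtain W where "clopen_upset X le W" "x \<in> W" "W \<inter> spatial_part X le \<subseteq> G"
      using openin_spatial_topology_local \<U> by meson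
    with \<open>G \<in> \<U>\<close> show "x \<in> \<Union>\<W>"
      unfolding \<W>_def by blast
  qed
  moreover have "\<forall>W\<in>\<W>. clopen_upset X le W"
    unfolding \<W>_def by blast
  ultimately obtain \<F> where \<F>: "finite \<F>" "\<F> \<subseteq> \<W>" "V \<subseteq> \<Union>\<F>"
    using basic_covers by meson
  then have "\<forall>W\<in>\<F>. \<exists>G. G \<in> \<U> \<and> W \<inter> spatial_part X le \<subseteq> G"
    unfolding \<W>_def by blast
  then obtain G where G: "\<forall>W\<in>\<F>. G W \<in> \<U> \<and> W \<inter> spatial_part X le \<subseteq> G W"
    by (rule bchoice[elim_format]) blast
  show "\<exists>\<F>. finite \<F> \<and> \<F> \<subseteq> \<U> \<and> V \<subseteq> \<Union>\<F>"
  proof (intro exI conjI)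
    show "finite (G ` \<F>)" "G ` \<F> \<subseteq> \<U>"
      using \<F> G by auto
    show "V \<subseteq> \<Union>(G ` \<F>)"
      using \<F>(3) G VY by blast
  qed
qed

lemma compactin_spatial_topology_cover:
  assumes "compactin (spatial_topology X le) V"
    and "\<And>x. x \<in> V \<Longrightarrow> \<exists>W. P W \<and> x \<in> W"
    and "P {}" and "\<And>A B. P A \<Longrightarrow> P B \<Longrightarrow> P (A \<union> B)"
    and "\<And>W. P W \<Longrightarrow> clopen_upset X le W"
  shows "\<exists>W. P W \<and> V \<subseteq> W"
proof -
  have "\<forall>W\<in>{W. P W}. clopen_upset X le W"
    using assms(5) by blast
  moreover have "V \<subseteq> \<Union>{W. P W}"
    using assms(2) by blast
  ultimately obtain \<F> where "finite \<F>" "\<F> \<subseteq> {W. P W}" "V \<subseteq> \<Union>\<F>"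
    by (rule compactin_spatial_topology_finite_subcover[OF assms(1)])
  moreover from this have "P (\<Union>\<F>)"
    using finite_Union_closed[of \<F> P] assms(3,4) by blast
  ultimately show ?thesis by blast
qed

lemma closure_of_dense_Int_clopen:
  assumes "X closure_of Y = topspace X" and "clopenin X W"
  shows "X closure_of (W \<inter> Y) = W"
proof -
  have "W \<subseteq> X closure_of Y"
    using assms openin_subset unfolding clopenin_def by auto
  then have "X closure_of (W \<inter> Y) = X closure_of W"
    using closure_of_openin_Int_superset assms(2) unfolding clopenin_def by blast
  then show ?thesis
    using assms(2) closure_of_closedin unfolding clopenin_def by metis
qed

section \<open>Compact open subsets of the spatial part\<close>

lemma compactin_spatial_topology_scott_upset:
  assumes P: "priestley_space X le" and U: "scott_upset X le U"
  shows "compactin (spatial_topology X le) (U \<inter> spatial_part X le)"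
proof (rule compactin_spatial_topologyI[OF Int_lower2])
  fix \<W> assume \<W>: "\<forall>W\<in>\<W>. clopen_upset X le W" "U \<inter> spatial_part X le \<subseteq> \<Union>\<W>"
  have U_closed: "closedin X U" and U_up: "upset_in X le U"
    and U_min: "minimals le U \<subseteq> spatial_part X le"
    using U unfolding scott_upset_def by auto
  have "U \<subseteq> \<Union>\<W>"
  proof
    fix z assume z: "z \<in> U"
    then obtain m where m: "m \<in> minimals le U" "le m z"
      using priestley_exists_minimal_below[OF P U_closed] by blast
    then have "m \<in> U \<inter> spatial_part X le"
      using U_min unfolding minimals_def by blast
    then obtain W where W: "W \<in> \<W>" "m \<in> W"
      using \<W> by blast
    have "z \<in> topspace X"
      using z U_up unfolding upset_in_def by blast
    with W m(2) \<W> have "z \<in> W"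
      unfolding upset_in_def by blast
    with W(1) show "z \<in> \<Union>\<W>" ..
  qed
  moreover have "compactin X U"
    using P U_closed closedin_compact_space priestley_space_imp_compact by blast
  moreover have "\<forall>W\<in>\<W>. openin X W"
    using \<W> unfolding clopenin_def by blast
  ultimately have "\<exists>\<F>. finite \<F> \<and> \<F> \<subseteq> \<W> \<and> U \<subseteq> \<Union>\<F>"
    unfolding compactin_def by blast
  then show "\<exists>\<F>. finite \<F> \<and> \<F> \<subseteq> \<W> \<and> U \<inter> spatial_part X le \<subseteq> \<Union>\<F>"
    by blast
qed

lemma compact_openin_spatial_topology_eq_Int:
  assumes "compactin (spatial_topology X le) V" and "openin (spatial_topology X le) V"
  shows "\<exists>W. clopen_upset X le W \<and> V = W \<inter> spatial_part X le"
proof -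
  have "\<exists>W. (clopen_upset X le W \<and> W \<inter> spatial_part X le \<subseteq> V) \<and> V \<subseteq> W"
  proof (rule compactin_spatial_topology_cover[OF assms(1),
        of "\<lambda>W. clopen_upset X le W \<and> W \<inter> spatial_part X le \<subseteq> V"])
    show "\<exists>W. (clopen_upset X le W \<and> W \<inter> spatial_part X le \<subseteq> V) \<and> x \<in> W" if "x \<in> V" for x
      using openin_spatial_topology_local[OF assms(2) that] by blast
    show "clopen_upset X le {} \<and> {} \<inter> spatial_part X le \<subseteq> V"
      using clopen_upset_empty by simp
    show "clopen_upset X le (A \<union> B) \<and> (A \<union> B) \<inter> spatial_part X le \<subseteq> V"
      if "clopen_upset X le A \<and> A \<inter> spatial_part X le \<subseteq> V"
        and "clopen_upset X le B \<and> B \<inter> spatial_part X le \<subseteq> V" for A B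
      using that clopen_upset_Un by blast
  qed simp
  moreover have "V \<subseteq> spatial_part X le"
    using assms(1) by (rule compactin_spatial_topology_subset)
  ultimately show ?thesis by blast
qed

lemma minimals_closure_of_compactin_spatial_topology:
  assumes P: "priestley_space X le" and V: "compactin (spatial_topology X le) V"
  shows "minimals le (X closure_of V) \<subseteq> spatial_part X le"
proof
  fix m assume m: "m \<in> minimals le (X closure_of V)"
  show "m \<in> spatial_part X le"
  proof (rule ccontr)
    assume mY: "m \<notin> spatial_part X le"
    have VY: "V \<subseteq> spatial_part X le"
      using V by (rule compactin_spatial_topology_subset)
    have mX: "m \<in> topspace X"
      using m closure_of_subset_topspace[of X V] unfolding minimals_def by blast
    have "\<exists>Z. (clopen_upset X le Z \<and> m \<notin> Z) \<and> V \<subseteq> Z"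
    proof (rule compactin_spatial_topology_cover[OF V, of "\<lambda>Z. clopen_upset X le Z \<and> m \<notin> Z"])
      fix x assume x: "x \<in> V"
      have xX: "x \<in> topspace X"
        using x VY unfolding spatial_part_def by blast
      then have "x \<in> X closure_of V"
        using x closure_of_subset_Int by fastforce
      then have "\<not> le x m"
        using m mY x VY unfolding minimals_def by blast
      then show "\<exists>Z. (clopen_upset X le Z \<and> m \<notin> Z) \<and> x \<in> Z"
        using priestley_separation[OF P xX mX] by blast
    next
      show "clopen_upset X le {} \<and> m \<notin> {}"
        using clopen_upset_empty by simp
    next
      fix A B assume "clopen_upset X le A \<and> m \<notin> A" "clopen_upset X le B \<and> m \<notin> B"
      then show "clopen_upset X le (A \<union> B) \<and> m \<notin> A \<union> B"
        using clopen_upset_Un by blast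
    qed simp
    then obtain Z where Z: "clopen_upset X le Z" "m \<notin> Z" "V \<subseteq> Z"
      by blast
    then have "X closure_of V \<subseteq> Z"
      using closure_of_minimal unfolding clopenin_def by blast
    then show False
      using m Z(2) unfolding minimals_def by blast
  qed
qed

theorem lemma4p10:
  fixes X :: "'a topology" and le :: "'a \<Rightarrow> 'a \<Rightarrow> bool" and U :: "'a set"
  assumes "SL_space X le"
    and "U \<subseteq> topspace X"
  shows "(clopenin X U \<and> scott_upset X le U) \<longleftrightarrow>
         (\<exists>V. openin (spatial_topology X le) V \<and> compactin (spatial_topology X le) V
              \<and> X closure_of V = U)"
proof -
  have P: "priestley_space X le" and dense: "X closure_of spatial_part X le = topspace X"
    using assms(1) unfolding SL_space_def L_space_def by blast+
  show ?thesis
  proof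
    assume U: "clopenin X U \<and> scott_upset X le U"
    let ?V = "U \<inter> spatial_part X le"
    have "openin (spatial_topology X le) ?V"
      using U openin_spatial_topology_basic unfolding scott_upset_def by blast
    moreover have "compactin (spatial_topology X le) ?V"
      using U compactin_spatial_topology_scott_upset[OF P] by blast
    moreover have "X closure_of ?V = U"
      using U closure_of_dense_Int_clopen[OF dense] by blast
    ultimately show "\<exists>V. openin (spatial_topology X le) V \<and> compactin (spatial_topology X le) V
                 \<and> X closure_of V = U"
      by blast
  next
    assume "\<exists>V. openin (spatial_topology X le) V \<and> compactin (spatial_topology X le) V
              \<and> X closure_of V = U"
    then obtain V where V: "openin (spatial_topology X le) V" "compactin (spatial_topology X le) V"
      and U_eq: "X closure_of V = U"
      by blast
    obtain W where W: "clopen_upset X le W" "V = W \<inter> spatial_part X le"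
      using compact_openin_spatial_topology_eq_Int[OF V(2,1)] by blast
    have "U = W"
      using U_eq W closure_of_dense_Int_clopen[OF dense] by blast
    moreover have "minimals le U \<subseteq> spatial_part X le"
      using minimals_closure_of_compactin_spatial_topology[OF P V(2)] U_eq by blast
    ultimately show "clopenin X U \<and> scott_upset X le U"
      using W(1) unfolding scott_upset_def clopenin_def by blast
  qed
qed

end
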